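(* Let $a>1$ and $b>1$ be integers, let $n=a+b-1$, and consider the 1-connected $(a,b)$-puzzle on $V=\{1,2,\dots,n\}$, i.e. the cycle set consisting of the two cycles $\alpha=(1\ 2\ \dots\ a)$ and $\beta=(a\ a+1\ \dots\ n)$. Its configuration group $H=\langle \alpha,\beta\rangle\le S_n$ is the alternating group $A_n$ if both $a$ and $b$ are odd, and it is the symmetric group $S_n$ otherwise. Moreover, any permutation in $H$ can be generated in $O(n^2)$ shifts; that is, there is an absolute constant $K$ (independent of $a,b$) such that every element of $H$ is a product of at most $Kn^2$ factors, each of which is one of $\alpha,\alpha^{-1},\beta,\beta^{-1}$.
   Context: Permutations are written in cycle notation. Shifting the tokens (one on each vertex of $V$) along a cycle $(v_1\ v_2\ \dots\ v_j)$ in either direction corresponds to applying the permutation $(v_1\ v_2\ \dots\ v_j)$ or its inverse; a "shift" is one such application. The configuration group of a cycle set is the subgroup of $S_n$ generated by the permutations corresponding to its cycles. $A_n$ denotes the group of even permutations and $S_n$ the group of all permutations of $\{1,\dots,n\}$. *)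

theory Defs
  imports "HOL-Algebra.Sym_Groups"
begin

definition puzzle_alpha :: "nat \<Rightarrow> nat \<Rightarrow> nat \<Rightarrow> nat" where
  "puzzle_alpha a b = cycle_of_list [1..<a+1]"

definition puzzle_beta :: "nat \<Rightarrow> nat \<Rightarrow> nat \<Rightarrow> nat" where
  "puzzle_beta a b = cycle_of_list [a..<a+b]"

definition config_group :: "nat \<Rightarrow> nat \<Rightarrow> (nat \<Rightarrow> nat) set" where
  "config_group a b = generate (sym_group (a+b-1)) {puzzle_alpha a b, puzzle_beta a b}"

definition puzzle_shifts :: "nat \<Rightarrow> nat \<Rightarrow> (nat \<Rightarrow> nat) set" where
  "puzzle_shifts a b = {puzzle_alpha a b, inv' (puzzle_alpha a b), puzzle_beta a b, inv' (puzzle_beta a b)}"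

end

theory Submission
  imports Defs
begin

text \<open>The commutator \<open>\<alpha>\<beta>\<alpha>\<inverse>\<beta>\<inverse>\<close> is the 3-cycle \<open>(1 a+1 a)\<close>. Conjugating it by powers of
  \<open>\<alpha>\<close>, \<open>\<beta>\<close> and of the full cycle \<open>\<sigma> = \<alpha>\<beta> = (1 2 \<dots> n)\<close> yields every 3-cycle
  \<open>(v s s+1)\<close> with \<open>v < s < n\<close> as a word of length \<open>O(n)\<close>. An even permutation \<open>p\<close> of
  \<open>{1..m}\<close> is a product of at most \<open>m\<close> such 3-cycles: one of them, \<open>d\<close>, agrees with \<open>p\<close> at
  \<open>m\<close>, and \<open>d\<inverse>p\<close> is an even permutation of \<open>{1..m-1}\<close>. So \<open>A\<^sub>n\<close> is reached with
  words of length \<open>O(n\<^sup>2)\<close>. Finally \<open>\<alpha>\<close> and \<open>\<beta>\<close> are cycles of lengths \<open>a\<close> and \<open>b\<close>,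
  so both are even iff \<open>a\<close> and \<open>b\<close> are odd, and otherwise one odd generator times
  \<open>A\<^sub>n\<close> gives the odd permutations.\<close>

definition word_length_le :: "('a \<Rightarrow> 'a) set \<Rightarrow> nat \<Rightarrow> ('a \<Rightarrow> 'a) \<Rightarrow> bool" where
  "word_length_le S k p \<longleftrightarrow> (\<exists>ws. set ws \<subseteq> S \<and> length ws \<le> k \<and> p = foldr (\<circ>) ws id)"

text \<open>Stated separately because the simplifier eta-expands the unapplied \<open>(\<circ>)\<close> inside \<open>foldr\<close>.\<close>
lemma foldr_comp_id_Cons: "foldr (\<circ>) (f # fs) id = f \<circ> foldr (\<circ>) fs id"
  by simp

lemma foldr_comp_id_append: "foldr (\<circ>) (xs @ ys) id = foldr (\<circ>) xs id \<circ> foldr (\<circ>) ys id"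
  by (induction xs) auto

lemma word_length_le_id: "word_length_le S k id"
  unfolding word_length_le_def by (rule exI[of _ "[]"]) simp

lemma word_length_le_letter: "s \<in> S \<Longrightarrow> word_length_le S 1 s"
  unfolding word_length_le_def by (rule exI[of _ "[s]"]) simp

lemma word_length_le_mono: "word_length_le S k p \<Longrightarrow> k \<le> m \<Longrightarrow> word_length_le S m p"
  unfolding word_length_le_def by fastforce

lemma word_length_le_subset: "word_length_le T k p \<Longrightarrow> T \<subseteq> S \<Longrightarrow> word_length_le S k p"
  unfolding word_length_le_def by blast

lemma word_length_le_comp:
  assumes "word_length_le S k p" "word_length_le S m q"
  shows "word_length_le S (k + m) (p \<circ> q)"
proof -
  obtain ws vs where "set ws \<subseteq> S" "length ws \<le> k" "p = foldr (\<circ>) ws id"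
    "set vs \<subseteq> S" "length vs \<le> m" "q = foldr (\<circ>) vs id"
    using assms unfolding word_length_le_def by blast
  then show ?thesis
    unfolding word_length_le_def
    by (intro exI[of _ "ws @ vs"]) (simp add: foldr_comp_id_append del: foldr_append)
qed

lemma word_length_le_funpow: "word_length_le S k p \<Longrightarrow> word_length_le S (m * k) (p ^^ m)"
  by (induction m) (auto simp: word_length_le_id dest: word_length_le_comp)

lemma word_length_le_subst:
  assumes "word_length_le T k p" and "\<And>t. t \<in> T \<Longrightarrow> word_length_le S c t"
  shows "word_length_le S (c * k) p"
proof -
  have "word_length_le S (c * length ws) (foldr (\<circ>) ws id)" if "set ws \<subseteq> T" for ws
    using that
  proof (induction ws)
    case Nil
    show ?case by (simp flip: id_def add: word_length_le_id)
  next
    case (Cons t ws)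
    have "t \<in> T" "set ws \<subseteq> T" using Cons.prems by simp_all
    show ?case
      unfolding foldr_comp_id_Cons length_Cons mult_Suc_right
      by (rule word_length_le_comp[OF assms(2)[OF \<open>t \<in> T\<close>] Cons.IH[OF \<open>set ws \<subseteq> T\<close>]])
  qed
  moreover obtain ws where "set ws \<subseteq> T" "length ws \<le> k" "p = foldr (\<circ>) ws id"
    using assms(1) unfolding word_length_le_def by blast
  ultimately show ?thesis by (metis mult_le_mono2 word_length_le_mono)
qed

lemma word_length_le_in_subgroup:
  assumes "subgroup H (sym_group n)" "S \<subseteq> H" "word_length_le S k p"
  shows "p \<in> H"
proof -
  have "foldr (\<circ>) ws id \<in> H" if "set ws \<subseteq> S" for ws
    using that
  proof (induction ws)
    case Nil
    show ?case using subgroup.one_closed[OF assms(1)] by (simp add: sym_group_one id_def)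
  next
    case (Cons s ws)
    have "s \<in> H" using Cons.prems assms(2) by auto
    moreover have "foldr (\<circ>) ws id \<in> H"
      using Cons.IH[OF order_trans[OF set_subset_Cons Cons.prems]] .
    ultimately show ?case
      unfolding foldr_comp_id_Cons using subgroup.m_closed[OF assms(1)] by (simp only: sym_group_mult)
  qed
  then show ?thesis using assms(3) unfolding word_length_le_def by blast
qed

locale inv_closed_bijections =
  fixes S :: "('a \<Rightarrow> 'a) set"
  assumes bij: "s \<in> S \<Longrightarrow> bij s"
    and inv_closed: "s \<in> S \<Longrightarrow> inv' s \<in> S"
begin

lemma bij_foldr_comp: "set ws \<subseteq> S \<Longrightarrow> bij (foldr (\<circ>) ws id)"
  by (induction ws) (auto simp: foldr_comp_id_Cons intro: bij_comp bij)

lemma word_length_le_bij: "word_length_le S k p \<Longrightarrow> bij p"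
  unfolding word_length_le_def using bij_foldr_comp by blast

lemma word_length_le_inv:
  assumes "word_length_le S k p"
  shows "word_length_le S k (inv' p)"
proof -
  have "word_length_le S (length ws) (inv' (foldr (\<circ>) ws id))" if "set ws \<subseteq> S" for ws
    using that
  proof (induction ws)
    case Nil
    show ?case by (simp flip: id_def add: word_length_le_id)
  next
    case (Cons s ws)
    let ?p = "foldr (\<circ>) ws id"
    have "s \<in> S" "set ws \<subseteq> S" using Cons.prems by simp_all
    then have inv_comp: "inv' (s \<circ> ?p) = inv' ?p \<circ> inv' s"
      by (intro o_inv_distrib bij bij_foldr_comp)
    show ?case
      unfolding foldr_comp_id_Cons inv_comp length_Cons Suc_eq_plus1
      by (rule word_length_le_comp[OF Cons.IH[OF \<open>set ws \<subseteq> S\<close>]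
            word_length_le_letter[OF inv_closed[OF \<open>s \<in> S\<close>]]])
  qed
  moreover obtain ws where "set ws \<subseteq> S" "length ws \<le> k" "p = foldr (\<circ>) ws id"
    using assms unfolding word_length_le_def by blast
  ultimately show ?thesis by (metis word_length_le_mono)
qed

lemma word_length_le_conj_cycle:
  assumes "word_length_le S k g" "word_length_le S m (cycle_of_list cs)" "distinct cs"
    and "map g cs = ds"
  shows "word_length_le S (2 * k + m) (cycle_of_list ds)"
proof -
  have "word_length_le S (k + m + k) (g \<circ> cycle_of_list cs \<circ> inv' g)"
    using assms(1,2) word_length_le_inv[OF assms(1)] by (intro word_length_le_comp)
  then show ?thesis
    using conjugation_of_cycle[OF \<open>distinct cs\<close> word_length_le_bij[OF assms(1)]] assms(4)
    by (auto elim: word_length_le_mono)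
qed

end

lemma cycle_of_list_3_apply:
  "distinct [x, y, z] \<Longrightarrow>
    cycle_of_list [x, y, z] u = (if u = x then y else if u = y then z else if u = z then x else u)"
  by (auto simp: transpose_def)

lemma cycle_of_list_3_rotate: "distinct [x, y, z] \<Longrightarrow> cycle_of_list [x, y, z] = cycle_of_list [y, z, x]"
  by (auto simp: fun_eq_iff transpose_def)

lemma inv_cycle_of_list_3: "distinct [x, y, z] \<Longrightarrow> inv' (cycle_of_list [x, y, z]) = cycle_of_list [x, z, y]"
  by (intro inv_unique_comp) (auto simp: fun_eq_iff transpose_def)

lemma evenperm_cycle_of_list:
  "cs \<noteq> [] \<Longrightarrow> distinct cs \<Longrightarrow> evenperm (cycle_of_list cs) \<longleftrightarrow> odd (length cs)"
proof (induction cs rule: cycle_of_list.induct)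
  case (1 i j cs)
  have "evenperm (cycle_of_list (i # j # cs)) \<longleftrightarrow> \<not> evenperm (cycle_of_list (j # cs))"
    using "1.prems" by (simp add: evenperm_comp permutation_swap_id permutation_of_cycle evenperm_swap)
  with 1 show ?case by (simp del: cycle_of_list.simps)
qed auto

lemma cycle_of_list_upt_apply:
  "cycle_of_list [lo..<hi] u = (if lo \<le> u \<and> u < hi then if Suc u < hi then Suc u else lo else u)"
proof (induction "hi - lo" arbitrary: lo)
  case 0
  then show ?case by simp
next
  case (Suc d)
  show ?case
  proof (cases "Suc lo < hi")
    case True
    then have "[lo..<hi] = lo # Suc lo # [Suc (Suc lo)..<hi]" "[Suc lo..<hi] = Suc lo # [Suc (Suc lo)..<hi]"
      by (simp_all add: upt_conv_Cons)
    then have "cycle_of_list [lo..<hi] u = transpose lo (Suc lo) (cycle_of_list [Suc lo..<hi] u)"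
      by simp
    with Suc True show ?thesis by (auto simp: transpose_def)
  qed (use Suc in \<open>auto simp: upt_conv_Cons\<close>)
qed

lemma funpow_cycle_of_list_upt:
  assumes "lo \<le> u" "u < hi" "k \<le> hi - lo"
  shows "(cycle_of_list [lo..<hi] ^^ k) u = (if u + k < hi then u + k else u + k - (hi - lo))"
  using assms by (induction k) (auto simp: cycle_of_list_upt_apply)

lemma funpow_cycle_of_list_upt_wrap:
  assumes "lo \<le> u" "u < hi" "hi \<le> u + k" "k \<le> hi - lo"
  shows "(cycle_of_list [lo..<hi] ^^ k) u = u + k - (hi - lo)"
  using funpow_cycle_of_list_upt[OF assms(1,2,4)] assms(3) by simp

lemma funpow_cycle_of_list_upt_outside:
  "\<not> (lo \<le> u \<and> u < hi) \<Longrightarrow> (cycle_of_list [lo..<hi] ^^ k) u = u"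
  by (induction k) (auto simp: cycle_of_list_upt_apply)

lemma evenperm_inv_comp:
  "permutation f \<Longrightarrow> permutation g \<Longrightarrow> evenperm (inv' f \<circ> g) \<longleftrightarrow> (evenperm f \<longleftrightarrow> evenperm g)"
  by (simp add: evenperm_comp evenperm_inv permutation_inverse)

lemma comp_inv_comp_cancel: "bij f \<Longrightarrow> f \<circ> (inv' f \<circ> g) = g"
  using surj_iff[of f] bij_is_surj[of f] by (metis comp_assoc id_comp)

definition adjacent_three_cycles :: "nat \<Rightarrow> (nat \<Rightarrow> nat) set" where
  "adjacent_three_cycles m =
    {cycle_of_list [v, s, Suc s] | v s. 1 \<le> v \<and> v < s \<and> s < m} \<union>
    {cycle_of_list [v, Suc s, s] | v s. 1 \<le> v \<and> v < s \<and> s < m}"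

lemma adjacent_three_cycles_mono: "m \<le> m' \<Longrightarrow> adjacent_three_cycles m \<subseteq> adjacent_three_cycles m'"
  unfolding adjacent_three_cycles_def by fastforce

lemma adjacent_three_cycles_subset_alt_group: "adjacent_three_cycles m \<subseteq> carrier (alt_group m)"
proof -
  have "adjacent_three_cycles m \<subseteq> three_cycles m"
    unfolding adjacent_three_cycles_def by fastforce
  then show ?thesis using three_cycles_incl by blast
qed

lemma adjacent_three_cycle_agrees_at_top:
  assumes "p permutes {1..Suc m}" "evenperm p" "p (Suc m) \<noteq> Suc m"
  obtains d where "d \<in> adjacent_three_cycles (Suc m)" "d (Suc m) = p (Suc m)"
proof -
  let ?w = "p (Suc m)"
  have w: "1 \<le> ?w" "?w \<le> m" using permutes_in_image[OF assms(1), of "Suc m"] assms(3) by auto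
  show thesis
  proof (cases "?w < m")
    case True
    show thesis
      by (rule that[of "cycle_of_list [?w, m, Suc m]"]) (use w True in \<open>auto simp: adjacent_three_cycles_def\<close>)
  next
    case False
    have "m \<noteq> 1"
    proof
      assume "m = 1"
      then have "p permutes {1, 2}"
        using assms(1) by (simp add: numeral_2_eq_2 atLeastAtMostSuc_conv insert_commute)
      then have "p = id" using assms(2) by (auto simp: permutes_doubleton_iff evenperm_swap)
      with assms(3) show False by simp
    qed
    then have "1 < m" "?w = m" using w False by simp_all
    show thesis
      by (rule that[of "cycle_of_list [1, Suc m, m]"]) (use \<open>1 < m\<close> \<open>?w = m\<close> in \<open>auto simp: adjacent_three_cycles_def\<close>)
  qed
qed

lemma evenperm_word_length_le_adjacent_three_cycles:
  "p permutes {1..m} \<Longrightarrow> evenperm p \<Longrightarrow> word_length_le (adjacent_three_cycles m) m p"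
proof (induction m arbitrary: p)
  case 0
  then have "p = id" by simp
  then show ?case by (simp only: word_length_le_id)
next
  case (Suc m)
  let ?T = "adjacent_three_cycles (Suc m)"
  have IH: "word_length_le ?T m q" if "q permutes {1..Suc m}" "q (Suc m) = Suc m" "evenperm q" for q
  proof -
    have "q permutes {1..m}"
      using that(1) by (rule permutes_superset) (use that(2) in \<open>auto simp: le_Suc_eq\<close>)
    then have "word_length_le (adjacent_three_cycles m) m q" using that(3) by (rule Suc.IH)
    then show ?thesis by (rule word_length_le_subset) (simp add: adjacent_three_cycles_mono)
  qed
  show ?case
  proof (cases "p (Suc m) = Suc m")
    case True
    have "word_length_le ?T m p" using IH[OF Suc.prems(1) True Suc.prems(2)] .
    then show ?thesis by (rule word_length_le_mono) simp
  next
    case False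
    with Suc.prems obtain d where d: "d \<in> ?T" "d (Suc m) = p (Suc m)"
      by (rule adjacent_three_cycle_agrees_at_top)
    then have "d permutes {1..Suc m}" "evenperm d"
      using adjacent_three_cycles_subset_alt_group[of "Suc m"] by (auto simp: alt_group_carrier)
    define q where "q = inv' d \<circ> p"
    have "q permutes {1..Suc m}"
      unfolding q_def using Suc.prems(1) permutes_inv[OF \<open>d permutes _\<close>] by (rule permutes_compose)
    moreover have "q (Suc m) = Suc m"
      unfolding q_def using d(2) permutes_inv_eq[OF \<open>d permutes _\<close>] by simp
    moreover have "evenperm q"
      unfolding q_def using \<open>evenperm d\<close> Suc.prems
      by (subst evenperm_inv_comp) (auto intro: permutes_imp_permutation \<open>d permutes _\<close>)
    ultimately have "word_length_le ?T (1 + m) (d \<circ> q)"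
      by (intro word_length_le_comp word_length_le_letter d(1) IH)
    then show ?thesis
      unfolding q_def comp_inv_comp_cancel[OF permutes_bij[OF \<open>d permutes _\<close>]] by simp
  qed
qed

lemma puzzle_alpha_apply:
  "puzzle_alpha a b u = (if 1 \<le> u \<and> u < a then Suc u else if u = a \<and> 0 < a then 1 else u)"
  unfolding puzzle_alpha_def cycle_of_list_upt_apply by auto

lemma puzzle_beta_apply:
  "puzzle_beta a b u = (if a \<le> u \<and> Suc u < a+b then Suc u else if Suc u = a+b \<and> 0 < b then a else u)"
  unfolding puzzle_beta_def cycle_of_list_upt_apply by auto

lemma bij_puzzle_alpha: "bij (puzzle_alpha a b)"
  unfolding puzzle_alpha_def by (rule permutation_bijective[OF permutation_of_cycle])

lemma bij_puzzle_beta: "bij (puzzle_beta a b)"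
  unfolding puzzle_beta_def by (rule permutation_bijective[OF permutation_of_cycle])

interpretation puzzle_shifts: inv_closed_bijections "puzzle_shifts a b" for a b
proof
  show "bij s" if "s \<in> puzzle_shifts a b" for s
    using that bij_puzzle_alpha bij_puzzle_beta unfolding puzzle_shifts_def by (auto intro: bij_imp_bij_inv)
  show "inv' s \<in> puzzle_shifts a b" if "s \<in> puzzle_shifts a b" for s
    using that bij_puzzle_alpha bij_puzzle_beta unfolding puzzle_shifts_def by (auto simp: inv_inv_eq)
qed

lemma puzzle_alpha_permutes: "0 < b \<Longrightarrow> puzzle_alpha a b permutes {1..a+b-1}"
  unfolding puzzle_alpha_def by (rule permutes_subset[OF cycle_permutes]) auto

lemma puzzle_beta_permutes: "0 < a \<Longrightarrow> puzzle_beta a b permutes {1..a+b-1}"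
  unfolding puzzle_beta_def by (rule permutes_subset[OF cycle_permutes]) auto

lemma evenperm_puzzle_alpha: "0 < a \<Longrightarrow> evenperm (puzzle_alpha a b) \<longleftrightarrow> odd a"
  unfolding puzzle_alpha_def by (simp add: evenperm_cycle_of_list)

lemma evenperm_puzzle_beta: "0 < b \<Longrightarrow> evenperm (puzzle_beta a b) \<longleftrightarrow> odd b"
  unfolding puzzle_beta_def by (simp add: evenperm_cycle_of_list)

lemma puzzle_alpha_comp_beta:
  "0 < a \<Longrightarrow> 0 < b \<Longrightarrow> puzzle_alpha a b \<circ> puzzle_beta a b = cycle_of_list [1..<a+b]"
  unfolding fun_eq_iff comp_apply cycle_of_list_upt_apply puzzle_alpha_apply puzzle_beta_apply by auto

lemma puzzle_commutator:
  assumes "1 < a" "1 < b"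
  shows "puzzle_alpha a b \<circ> puzzle_beta a b \<circ> inv' (puzzle_alpha a b) \<circ> inv' (puzzle_beta a b)
    = cycle_of_list [1, a+1, a]"
proof -
  let ?\<alpha> = "puzzle_alpha a b" and ?\<beta> = "puzzle_beta a b"
  have "cycle_of_list [1, a+1, a] (?\<beta> (?\<alpha> u)) = ?\<alpha> (?\<beta> u)" for u
  proof -
    consider "u = 0" | "a+b \<le> u" | "1 \<le> u" "Suc u < a" | "Suc u = a" | "u = a" | "a < u" "Suc u < a+b"
      | "Suc u = a+b"
      by linarith
    then show ?thesis
      by cases (use assms in \<open>simp_all add: cycle_of_list_3_apply puzzle_alpha_apply puzzle_beta_apply\<close>)
  qed
  then have "?\<alpha> \<circ> ?\<beta> = cycle_of_list [1, a+1, a] \<circ> ?\<beta> \<circ> ?\<alpha>"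
    by (simp add: fun_eq_iff)
  then have "?\<alpha> \<circ> ?\<beta> \<circ> inv' ?\<alpha> \<circ> inv' ?\<beta>
      = cycle_of_list [1, a+1, a] \<circ> ?\<beta> \<circ> (?\<alpha> \<circ> inv' ?\<alpha>) \<circ> inv' ?\<beta>"
    by (simp only: comp_assoc)
  also have "\<dots> = cycle_of_list [1, a+1, a]"
    using bij_puzzle_alpha[of a b, THEN bij_is_surj] bij_puzzle_beta[of a b, THEN bij_is_surj]
    by (simp only: surj_iff comp_id comp_assoc)
  finally show ?thesis .
qed

lemma word_length_le_puzzle_alpha_funpow:
  "word_length_le (puzzle_shifts a b) k (cycle_of_list [1..<a+1] ^^ k)"
proof -
  have "word_length_le (puzzle_shifts a b) 1 (puzzle_alpha a b)"
    by (rule word_length_le_letter) (simp add: puzzle_shifts_def)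
  from word_length_le_funpow[OF this, of k] show ?thesis
    unfolding puzzle_alpha_def mult_1_right .
qed

lemma word_length_le_puzzle_beta_funpow:
  "word_length_le (puzzle_shifts a b) k (cycle_of_list [a..<a+b] ^^ k)"
proof -
  have "word_length_le (puzzle_shifts a b) 1 (puzzle_beta a b)"
    by (rule word_length_le_letter) (simp add: puzzle_shifts_def)
  from word_length_le_funpow[OF this, of k] show ?thesis
    unfolding puzzle_beta_def mult_1_right .
qed

lemma word_length_le_puzzle_full_cycle_funpow:
  assumes "0 < a" "0 < b"
  shows "word_length_le (puzzle_shifts a b) (k * 2) (cycle_of_list [1..<a+b] ^^ k)"
proof -
  have "word_length_le (puzzle_shifts a b) (1 + 1) (puzzle_alpha a b \<circ> puzzle_beta a b)"
    by (intro word_length_le_comp word_length_le_letter) (simp_all add: puzzle_shifts_def)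
  then have "word_length_le (puzzle_shifts a b) 2 (cycle_of_list [1..<a+b])"
    unfolding puzzle_alpha_comp_beta[OF assms] one_add_one .
  then show ?thesis by (rule word_length_le_funpow)
qed

lemma word_length_le_puzzle_commutator:
  assumes "1 < a" "1 < b"
  shows "word_length_le (puzzle_shifts a b) 4 (cycle_of_list [1, a+1, a])"
proof -
  have "word_length_le (puzzle_shifts a b) (1 + 1 + 1 + 1)
    (puzzle_alpha a b \<circ> puzzle_beta a b \<circ> inv' (puzzle_alpha a b) \<circ> inv' (puzzle_beta a b))"
    by (intro word_length_le_comp word_length_le_letter) (simp_all add: puzzle_shifts_def)
  then show ?thesis unfolding puzzle_commutator[OF assms] by (rule word_length_le_mono) simp
qed

text \<open>Conjugation by \<open>\<sigma>\<^sup>k\<close> translates a 3-cycle along \<open>{1..n}\<close>, so only the gaps between its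
  points matter. Conjugating \<open>(1 a+1 a)\<close> by a power of \<open>\<alpha>\<close> produces the gaps of
  \<open>(v s s+1)\<close> when \<open>s - v \<ge> b - 1\<close>; for smaller gaps a power of \<open>\<beta>\<close> is used instead.\<close>

lemma word_length_le_puzzle_far_three_cycle:
  assumes "1 < a" "1 < b" "1 \<le> v" "v < s" "s < a+b-1" "b - 1 \<le> s - v"
  shows "word_length_le (puzzle_shifts a b) (6 * (a+b-1)) (cycle_of_list [v, s, Suc s])"
proof -
  define i where "i = s - v + 2 - b"
  define k where "k = v + b - 2"
  have i: "1 \<le> i" "i < a" and k: "k + i = s" "a + 1 + k = a + b - 1 + v"
    using assms unfolding i_def k_def by linarith+
  let ?\<alpha>i = "cycle_of_list [1..<a+1] ^^ i" and ?\<sigma>k = "cycle_of_list [1..<a+b] ^^ k"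
  have "?\<alpha>i 1 = 1 + i" "?\<alpha>i (a+1) = a+1" "?\<alpha>i a = i"
    using i by (simp_all del: upt_Suc add: funpow_cycle_of_list_upt funpow_cycle_of_list_upt_outside)
  then have "word_length_le (puzzle_shifts a b) (2 * i + 4) (cycle_of_list [1+i, a+1, i])"
    using assms(1)
    by (intro puzzle_shifts.word_length_le_conj_cycle[OF word_length_le_puzzle_alpha_funpow
          word_length_le_puzzle_commutator[OF assms(1,2)]]) simp_all
  moreover have "cycle_of_list [1+i, a+1, i] = cycle_of_list [a+1, i, 1+i]"
    by (rule cycle_of_list_3_rotate) (use i in simp)
  ultimately have W: "word_length_le (puzzle_shifts a b) (2 * i + 4) (cycle_of_list [a+1, i, 1+i])"
    by simp
  have "?\<sigma>k (a+1) = v" "?\<sigma>k i = s" "?\<sigma>k (1+i) = Suc s"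
    using i k assms by (simp_all add: funpow_cycle_of_list_upt)
  then have "word_length_le (puzzle_shifts a b) (2 * (k * 2) + (2 * i + 4)) (cycle_of_list [v, s, Suc s])"
    using assms i
    by (intro puzzle_shifts.word_length_le_conj_cycle[OF word_length_le_puzzle_full_cycle_funpow W]) simp_all
  then show ?thesis by (rule word_length_le_mono) (use k assms in linarith)
qed

lemma word_length_le_puzzle_near_three_cycle:
  assumes "1 < a" "1 < b" "1 \<le> v" "v < s" "s < a+b-1" "s - v < b - 1"
  shows "word_length_le (puzzle_shifts a b) (6 * (a+b-1)) (cycle_of_list [v, Suc s, s])"
proof -
  define j where "j = s - v"
  define k where "k = (if a \<le> v then v - a else v + b - 1)"
  have j: "1 \<le> j" "v + j = s" "j + 2 \<le> b" "s + 2 \<le> a + b"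
    using assms unfolding j_def by linarith+
  let ?\<beta>j = "cycle_of_list [a..<a+b] ^^ j" and ?\<alpha>a = "cycle_of_list [1..<a+1] ^^ (a - 1)"
    and ?\<sigma>k = "cycle_of_list [1..<a+b] ^^ k"
  have "?\<beta>j 1 = 1" "?\<beta>j (a+1) = a+1+j" "?\<beta>j a = a+j"
    using assms(1) j by (simp_all add: funpow_cycle_of_list_upt funpow_cycle_of_list_upt_outside)
  then have W1: "word_length_le (puzzle_shifts a b) (2 * j + 4) (cycle_of_list [1, a+1+j, a+j])"
    using assms(1)
    by (intro puzzle_shifts.word_length_le_conj_cycle[OF word_length_le_puzzle_beta_funpow
          word_length_le_puzzle_commutator[OF assms(1,2)]]) simp_all
  have "?\<alpha>a 1 = a" "?\<alpha>a (a+1+j) = a+1+j" "?\<alpha>a (a+j) = a+j"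
    using assms(1) j
    by (simp_all del: upt_Suc add: funpow_cycle_of_list_upt funpow_cycle_of_list_upt_outside)
  then have W2: "word_length_le (puzzle_shifts a b) (2 * (a - 1) + (2 * j + 4)) (cycle_of_list [a, a+1+j, a+j])"
    using assms(1) j
    by (intro puzzle_shifts.word_length_le_conj_cycle[OF word_length_le_puzzle_alpha_funpow W1]) simp_all
  have "?\<sigma>k a = v \<and> ?\<sigma>k (a+1+j) = Suc s \<and> ?\<sigma>k (a+j) = s"
  proof (cases "a \<le> v")
    case True
    then have "k + a = v" by (simp add: k_def)
    with j assms(1) show ?thesis by (simp add: funpow_cycle_of_list_upt)
  next
    case False
    then have k: "k + 1 = v + b" using assms(2) by (simp add: k_def)
    have "?\<sigma>k a = a + k - (a + b - 1)"
      by (rule funpow_cycle_of_list_upt_wrap) (use False assms(1-3) k in linarith)+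
    moreover have "?\<sigma>k (a+1+j) = a + 1 + j + k - (a + b - 1)"
      by (rule funpow_cycle_of_list_upt_wrap) (use False assms(1-3) j k in linarith)+
    moreover have "?\<sigma>k (a+j) = a + j + k - (a + b - 1)"
      by (rule funpow_cycle_of_list_upt_wrap) (use False assms(1-3) j k in linarith)+
    ultimately show ?thesis using j k by linarith
  qed
  then have "word_length_le (puzzle_shifts a b) (2 * (k * 2) + (2 * (a - 1) + (2 * j + 4)))
      (cycle_of_list [v, Suc s, s])"
    using assms j
    by (intro puzzle_shifts.word_length_le_conj_cycle[OF word_length_le_puzzle_full_cycle_funpow W2]) simp_all
  then show ?thesis
    by (rule word_length_le_mono) (use assms(1,2) j in \<open>auto simp: k_def\<close>)
qed

lemma word_length_le_puzzle_adjacent_three_cycle: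
  assumes "1 < a" "1 < b" "t \<in> adjacent_three_cycles (a+b-1)"
  shows "word_length_le (puzzle_shifts a b) (6 * (a+b-1)) t"
proof -
  have "word_length_le (puzzle_shifts a b) (6 * (a+b-1)) (cycle_of_list [v, s, Suc s]) \<and>
        word_length_le (puzzle_shifts a b) (6 * (a+b-1)) (cycle_of_list [v, Suc s, s])"
    if "1 \<le> v" "v < s" "s < a+b-1" for v s
  proof (cases "b - 1 \<le> s - v")
    case True
    have "word_length_le (puzzle_shifts a b) (6 * (a+b-1)) (cycle_of_list [v, s, Suc s])"
      using assms(1,2) that True by (rule word_length_le_puzzle_far_three_cycle)
    moreover have "inv' (cycle_of_list [v, s, Suc s]) = cycle_of_list [v, Suc s, s]"
      by (rule inv_cycle_of_list_3) (use that in simp)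
    ultimately show ?thesis using puzzle_shifts.word_length_le_inv by metis
  next
    case False
    have "word_length_le (puzzle_shifts a b) (6 * (a+b-1)) (cycle_of_list [v, Suc s, s])"
      using assms(1,2) that False by (intro word_length_le_puzzle_near_three_cycle) simp_all
    moreover have "inv' (cycle_of_list [v, Suc s, s]) = cycle_of_list [v, s, Suc s]"
      by (rule inv_cycle_of_list_3) (use that in simp)
    ultimately show ?thesis using puzzle_shifts.word_length_le_inv by metis
  qed
  with assms(3) show ?thesis unfolding adjacent_three_cycles_def by blast
qed

lemma word_length_le_puzzle_permutes:
  assumes "1 < a" "1 < b" "p permutes {1..a+b-1}" "odd a \<and> odd b \<longrightarrow> evenperm p"
  shows "word_length_le (puzzle_shifts a b) (7 * (a+b-1)^2) p"
proof -
  let ?n = "a + b - 1"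
  have even: "word_length_le (puzzle_shifts a b) (6 * ?n * ?n) q"
    if "q permutes {1..?n}" "evenperm q" for q
    using evenperm_word_length_le_adjacent_three_cycles[OF that]
    by (rule word_length_le_subst) (rule word_length_le_puzzle_adjacent_three_cycle[OF assms(1,2)])
  show ?thesis
  proof (cases "evenperm p")
    case True
    show ?thesis
      by (rule word_length_le_mono[OF even[OF assms(3) True]]) (simp add: power2_eq_square)
  next
    case False
    obtain g where g: "g \<in> puzzle_shifts a b" "g permutes {1..?n}" "\<not> evenperm g"
    proof (cases "odd a")
      case True
      then have "even b" using False assms(4) by blast
      then show thesis
        using that[of "puzzle_beta a b"] assms puzzle_beta_permutes evenperm_puzzle_beta
        by (simp add: puzzle_shifts_def)
    next
      case False
      then show thesis
        using that[of "puzzle_alpha a b"] assms puzzle_alpha_permutes evenperm_puzzle_alpha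
        by (simp add: puzzle_shifts_def)
    qed
    define q where "q = inv' g \<circ> p"
    have "q permutes {1..?n}"
      unfolding q_def using assms(3) permutes_inv[OF g(2)] by (rule permutes_compose)
    moreover have "evenperm q"
      unfolding q_def using g(2,3) False assms(3)
      by (subst evenperm_inv_comp) (auto intro: permutes_imp_permutation)
    ultimately have "word_length_le (puzzle_shifts a b) (1 + 6 * ?n * ?n) (g \<circ> q)"
      by (intro word_length_le_comp word_length_le_letter g(1) even)
    then have "word_length_le (puzzle_shifts a b) (1 + 6 * ?n * ?n) p"
      unfolding q_def comp_inv_comp_cancel[OF permutes_bij[OF g(2)]] .
    then show ?thesis
      by (rule word_length_le_mono) (use assms(1,2) in \<open>simp add: power2_eq_square\<close>)
  qed
qed

lemma puzzle_shifts_subset_config_group: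
  assumes "0 < a" "0 < b"
  shows "puzzle_shifts a b \<subseteq> config_group a b"
proof -
  let ?G = "sym_group (a+b-1)"
  have "puzzle_alpha a b \<in> carrier ?G" "puzzle_beta a b \<in> carrier ?G"
    using puzzle_alpha_permutes[OF assms(2)] puzzle_beta_permutes[OF assms(1)]
    by (simp_all add: sym_group_carrier)
  then show ?thesis
    unfolding puzzle_shifts_def config_group_def
    by (auto simp flip: sym_group_inv_equality intro: generate.incl generate.inv)
qed

lemma config_group_eq:
  assumes "1 < a" "1 < b"
  shows "config_group a b =
    (if odd a \<and> odd b then carrier (alt_group (a+b-1)) else carrier (sym_group (a+b-1)))"
    (is "_ = ?H")
proof
  let ?G = "sym_group (a+b-1)"
  interpret G: group ?G by (rule sym_group_is_group)
  have gens: "{puzzle_alpha a b, puzzle_beta a b} \<subseteq> carrier ?G"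
    using assms puzzle_alpha_permutes puzzle_beta_permutes by (simp add: sym_group_carrier)
  have "{puzzle_alpha a b, puzzle_beta a b} \<subseteq> ?H"
    using assms gens evenperm_puzzle_alpha evenperm_puzzle_beta by (auto simp: alt_group_carrier sym_group_carrier)
  moreover have "subgroup ?H ?G"
    using alt_group_is_subgroup G.subgroup_self by simp
  ultimately show "config_group a b \<subseteq> ?H"
    unfolding config_group_def by (rule G.generate_subgroup_incl)
  show "?H \<subseteq> config_group a b"
  proof
    fix p assume "p \<in> ?H"
    then have "p permutes {1..a+b-1}" "odd a \<and> odd b \<longrightarrow> evenperm p"
      by (auto simp: alt_group_carrier sym_group_carrier split: if_splits)
    then have "word_length_le (puzzle_shifts a b) (7 * (a+b-1)^2) p"
      by (rule word_length_le_puzzle_permutes[OF assms])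
    moreover have "subgroup (config_group a b) ?G"
      unfolding config_group_def using gens by (rule G.generate_is_subgroup)
    ultimately show "p \<in> config_group a b"
      using puzzle_shifts_subset_config_group assms by (intro word_length_le_in_subgroup) auto
  qed
qed

lemma word_length_le_config_group:
  assumes "1 < a" "1 < b" "p \<in> config_group a b"
  shows "word_length_le (puzzle_shifts a b) (7 * (a+b-1)^2) p"
proof -
  have "p permutes {1..a+b-1}" "odd a \<and> odd b \<longrightarrow> evenperm p"
    using assms by (auto simp: config_group_eq alt_group_carrier sym_group_carrier split: if_splits)
  then show ?thesis by (rule word_length_le_puzzle_permutes[OF assms(1,2)])
qed

theorem theorem1:
  shows "(\<forall>a b::nat. a > 1 \<longrightarrow> b > 1 \<longrightarrow>
            config_group a b =
              (if odd a \<and> odd b then carrier (alt_group (a+b-1)) else carrier (sym_group (a+b-1))))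
       \<and> (\<exists>K::nat. \<forall>a b::nat. a > 1 \<longrightarrow> b > 1 \<longrightarrow>
            (\<forall>p \<in> config_group a b. \<exists>ws. set ws \<subseteq> puzzle_shifts a b
                 \<and> length ws \<le> K * (a+b-1)^2 \<and> p = foldr (\<circ>) ws id))"
  using config_group_eq word_length_le_config_group unfolding word_length_le_def by blast

end
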